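(* For $n\ge1$ let $$\mathrm{Luc}_n(x)=\sum_{m=0}^{\lfloor n/2\rfloor}q^{\binom{m}{2}}\begin{bmatrix} n-m\\ m\end{bmatrix}_q\frac{[n]_q}{[n-m]_q}x^{n-2m}.$$ Then for every $n\ge1$, $$\det\left(\begin{bmatrix} 2i\\ i-j\end{bmatrix}_q x^2+\begin{bmatrix} 2i+2\\ i+1-j\end{bmatrix}_q\right)_{i,j=0}^{n-1}=\mathrm{Luc}_{2n}(x),$$ $$x\det\left(\begin{bmatrix} 2i+1\\ i-j\end{bmatrix}_q x^2+\begin{bmatrix} 2i+3\\ i+1-j\end{bmatrix}_q\right)_{i,j=0}^{n-1}=\mathrm{Luc}_{2n+1}(x).$$
   Context: Here $q$ is an indeterminate, $[m]_q=\frac{1-q^m}{1-q}$, and for integers $m\ge0$ and $j$ the $q$-binomial coefficient is $\begin{bmatrix} m\\ j\end{bmatrix}_q=\frac{(1-q^m)(1-q^{m-1})\cdots(1-q^{m-j+1})}{(1-q)(1-q^2)\cdots(1-q^j)}$ for $0\le j\le m$ and $0$ otherwise. *)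

theory Defs
  imports Main "Jordan_Normal_Form.Determinant"
begin

definition qint :: "'a::field \<Rightarrow> nat \<Rightarrow> 'a" where
  "qint q m = (1 - q ^ m) / (1 - q)"

definition qbinom :: "'a::field \<Rightarrow> nat \<Rightarrow> int \<Rightarrow> 'a" where
  "qbinom q m j = (if 0 \<le> j \<and> j \<le> int m then
     (\<Prod>k<nat j. (1 - q ^ (m - k))) / (\<Prod>k=1..nat j. (1 - q ^ k))
   else 0)"

definition Luc :: "'a::field \<Rightarrow> nat \<Rightarrow> 'a \<Rightarrow> 'a" where
  "Luc q n x = (\<Sum>m=0..n div 2. q ^ (m choose 2) * qbinom q (n - m) (int m)
      * (qint q n / qint q (n - m)) * x ^ (n - 2 * m))"

end

theory Submission
  imports Defs
begin

text \<open>Write y = x^2 and Luc_j(x) = x^(j mod 2) L_j(y), where L_j is \<open>Luc_sq q j\<close> below.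
  For a = 0, 1 the matrix ([2i+a, i-j]_q y + [2i+a+2, i+1-j]_q) is lower Hessenberg with ones on
  the superdiagonal. A q-analogue of the inversion of Lucas polynomials,
  y^(m div 2) = \<Sum>_k (-1)^k [m, k]_q L_(m-2k)(y), says that the matrix ([2i+a, i-j]_q) maps the
  vector v_j = (-1)^j L_(2j+a)(y) to ((-1)^i y^i). Hence v is orthogonal to every row but the last,
  and the Hessenberg determinant is (-1)^(n-1) times the last row applied to v, which is
  L_(2n+a)(y). The inversion formula reduces to a terminating alternating sum that telescopes
  against an explicit q-hypergeometric antidifference.\<close>

lemma det_add_combination_to_first_column:
  fixes M :: "'a::comm_ring_1 mat"
  assumes M: "M \<in> carrier_mat n n" and v0: "v 0 = 1"
  shows "det (mat n n (\<lambda>(i,j). if j = 0 then (\<Sum>k<n. M $$ (i,k) * v k) else M $$ (i,j))) = det M"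
    (is "det ?P = _")
proof -
  define U where "U = mat n n (\<lambda>(i,j). if j = 0 then v i else if i = j then 1 else 0)"
  have U: "U \<in> carrier_mat n n" unfolding U_def by auto
  have "det U = prod_list (diag_mat U)"
    by (rule det_lower_triangular[OF _ U]) (auto simp: U_def)
  also have "\<dots> = 1"
    unfolding prod_list_diag_prod using v0 by (auto simp: U_def intro!: prod.neutral)
  finally have "det (M * U) = det M" using det_mult[OF M U] by simp
  moreover have "M * U = ?P"
  proof (rule eq_matI)
    fix i j assume ij: "i < dim_row ?P" "j < dim_col ?P"
    then have "(M * U) $$ (i,j) = (\<Sum>k<n. M $$ (i,k) * U $$ (k,j))"
      using M U by (auto simp: scalar_prod_def col_def row_def atLeast0LessThan intro!: sum.cong)
    also have "\<dots> = ?P $$ (i,j)"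
    proof (cases "j = 0")
      case True
      with ij show ?thesis by (auto simp: U_def intro!: sum.cong)
    next
      case False
      with ij have "(\<Sum>k<n. M $$ (i,k) * U $$ (k,j)) = (\<Sum>k<n. if k = j then M $$ (i,k) else 0)"
        by (intro sum.cong) (auto simp: U_def)
      with ij False show ?thesis by simp
    qed
    finally show "(M * U) $$ (i,j) = ?P $$ (i,j)" .
  qed (use M U in auto)
  ultimately show ?thesis by simp
qed

text \<open>Adding \<Sum>_k v_k * (column k) to column 0 kills that column except in the last row, and
  the complementary minor is lower unitriangular.\<close>
lemma det_lower_hessenberg:
  fixes M :: "'a::comm_ring_1 mat"
  assumes M: "M \<in> carrier_mat n n" and n: "n \<ge> 1"
    and zero_above: "\<And>i j. j < n \<Longrightarrow> j > Suc i \<Longrightarrow> M $$ (i,j) = 0"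
    and one_above: "\<And>i. Suc i < n \<Longrightarrow> M $$ (i, Suc i) = 1"
    and v0: "v 0 = 1"
    and kernel: "\<And>i. Suc i < n \<Longrightarrow> (\<Sum>j<n. M $$ (i,j) * v j) = 0"
  shows "det M = (-1)^(n-1) * (\<Sum>j<n. M $$ (n-1,j) * v j)"
proof -
  define P where "P = mat n n (\<lambda>(i,j). if j = 0 then (\<Sum>k<n. M $$ (i,k) * v k) else M $$ (i,j))"
  have P: "P \<in> carrier_mat n n" unfolding P_def by simp
  have "det M = det P" unfolding P_def using det_add_combination_to_first_column[of M n v, OF M v0] ..
  also have "\<dots> = (\<Sum>i<n. P $$ (i,0) * cofactor P i 0)"
    by (rule laplace_expansion_column[OF P]) (use n in auto)
  also have "\<dots> = (\<Sum>i\<in>{n-1}. P $$ (i,0) * cofactor P i 0)"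
  proof (rule sum.mono_neutral_right)
    show "\<forall>i\<in>{..<n} - {n-1}. P $$ (i,0) * cofactor P i 0 = 0"
    proof
      fix i assume "i \<in> {..<n} - {n-1}"
      then have "i < n" "Suc i < n" by auto
      then show "P $$ (i,0) * cofactor P i 0 = 0" by (simp add: P_def kernel)
    qed
  qed (use n in auto)
  also have "\<dots> = P $$ (n-1,0) * (-1)^(n-1) * det (mat_delete P (n-1) 0)"
    by (simp add: cofactor_def)
  also have "det (mat_delete P (n-1) 0) = prod_list (diag_mat (mat_delete P (n-1) 0))"
    by (rule det_lower_triangular[of "n-1"]) (use P in \<open>auto simp: mat_delete_def P_def zero_above\<close>)
  also have "\<dots> = 1" unfolding prod_list_diag_prod using P
    by (auto simp: mat_delete_def P_def one_above intro!: prod.neutral)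
  finally show ?thesis using n by (simp add: P_def)
qed

definition qfact :: "'a::field \<Rightarrow> nat \<Rightarrow> 'a" where
  "qfact q n = (\<Prod>k=1..n. (1 - q ^ k))"

lemma qfact_0 [simp]: "qfact q 0 = 1"
  by (simp add: qfact_def)

lemma qfact_Suc: "qfact q (Suc n) = qfact q n * (1 - q ^ Suc n)"
  by (simp add: qfact_def prod.nat_ivl_Suc')

lemma prod_top_factors_mult_qfact:
  "j \<le> m \<Longrightarrow> (\<Prod>k<j. (1 - q ^ (m - k))) * qfact q (m - j) = qfact q m"
proof (induction j)
  case (Suc j)
  then have "qfact q (m - j) = qfact q (m - Suc j) * (1 - q ^ (m - j))"
    using qfact_Suc[of q "m - Suc j"] by (simp add: Suc_diff_Suc)
  with Suc show ?case by (simp add: ac_simps)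
qed simp

lemma qbinom_0 [simp]: "qbinom q m 0 = 1"
  by (simp add: qbinom_def)

lemma qbinom_neg: "j < 0 \<Longrightarrow> qbinom q m j = 0"
  by (simp add: qbinom_def)

text \<open>For j = 0 the general formula would give 0 / 0 = 0, but the inversion formula needs
  L_0 = 1.\<close>
definition lucas_coeff :: "'a::field \<Rightarrow> nat \<Rightarrow> nat \<Rightarrow> 'a" where
  "lucas_coeff q j m = (if j = 0 then (if m = 0 then 1 else 0)
      else q^(m choose 2) * qbinom q (j-m) (int m) * (qint q j / qint q (j-m)))"

definition Luc_sq :: "'a::field \<Rightarrow> nat \<Rightarrow> 'a \<Rightarrow> 'a" where
  "Luc_sq q j y = (\<Sum>m\<le>j div 2. lucas_coeff q j m * y^(j div 2 - m))"

lemma Luc_eq_Luc_sq: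
  assumes "N \<ge> 1"
  shows "Luc q N x = x^(N mod 2) * Luc_sq q N (x^2)"
proof -
  have "x^(N - 2*m) = x^(N mod 2) * (x^2)^(N div 2 - m)" if "m \<le> N div 2" for m
  proof -
    from that have "N - 2*m = N mod 2 + 2*(N div 2 - m)" by presburger
    then show ?thesis by (simp add: power_add power_mult)
  qed
  then show ?thesis using assms
    by (auto simp: Luc_def Luc_sq_def lucas_coeff_def atLeast0AtMost sum_distrib_left ac_simps
        intro!: sum.cong)
qed

locale q_not_root_of_unity =
  fixes q :: "'a::field"
  assumes pow_neq_1: "\<And>k. k \<ge> 1 \<Longrightarrow> q ^ k \<noteq> 1"
begin

lemma pow_Suc_neq_1: "q ^ Suc k \<noteq> 1"
  using pow_neq_1[of "Suc k"] by simp

lemma q_neq_1 [simp]: "q \<noteq> 1"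
  using pow_neq_1[of 1] by simp

lemma qfact_nonzero [simp]: "qfact q n \<noteq> 0"
  by (induction n) (simp_all add: qfact_Suc pow_Suc_neq_1 del: power_Suc)

lemma qint_nonzero: "m \<ge> 1 \<Longrightarrow> qint q m \<noteq> 0"
  using pow_neq_1[of m] by (simp add: qint_def)

lemma qbinom_eq_qfact:
  assumes "j \<le> m"
  shows "qbinom q m (int j) = qfact q m / (qfact q j * qfact q (m - j))"
proof -
  have "(\<Prod>k<j. (1 - q ^ (m - k))) = qfact q m / qfact q (m - j)"
    using prod_top_factors_mult_qfact[OF assms] by (simp add: eq_divide_eq)
  then show ?thesis using assms by (simp add: qbinom_def qfact_def)
qed

text \<open>For n = 2s + r and k < s, the k-th summand of the alternating sum in
  \<open>sum_alternating_qbinom_lucas_coeff\<close>, and a closed form of its partial sums.\<close>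
definition inversion_summand :: "nat \<Rightarrow> nat \<Rightarrow> nat \<Rightarrow> 'a" where
  "inversion_summand s r k = (-1)^k * q^((s-k) choose 2) * qfact q (2*s+r) * qfact q (s+r-k-1)
     * (1 - q^(2*s+r-2*k)) / (qfact q k * qfact q (2*s+r-k) * qfact q (s-k) * qfact q r)"

definition inversion_partial_sum :: "nat \<Rightarrow> nat \<Rightarrow> nat \<Rightarrow> 'a" where
  "inversion_partial_sum s r k = (-1)^k * q^((s-k) choose 2) * qfact q (2*s+r) * qfact q (s+r-k-1)
     / ((1 - q^s) * qfact q k * qfact q (2*s+r-1-k) * qfact q (s-k-1) * qfact q r)"

lemma inversion_partial_sum_0:
  assumes "s \<ge> 1"
  shows "inversion_partial_sum s r 0 = inversion_summand s r 0"
proof -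
  have top: "qfact q (2*s+r) = qfact q (2*s+r-1) * (1 - q^(2*s+r))"
    and low: "qfact q s = qfact q (s-1) * (1 - q^s)"
    using assms qfact_Suc[of q "2*s+r-1"] qfact_Suc[of q "s-1"] by simp_all
  have nz: "1 - q^(2*s+r) \<noteq> 0" "1 - q^s \<noteq> 0"
    using pow_neq_1 assms by auto
  have "inversion_partial_sum s r 0 = q^(s choose 2) * qfact q (2*s+r) * qfact q (s+r-1)
      / ((1 - q^s) * qfact q (2*s+r-1) * qfact q (s-1) * qfact q r)"
    by (simp add: inversion_partial_sum_def)
  also have "\<dots> = q^(s choose 2) * qfact q (s+r-1) * (1 - q^(2*s+r)) / (qfact q s * qfact q r)"
    unfolding top low using nz by (simp add: field_simps)
  also have "\<dots> = inversion_summand s r 0"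
    by (simp add: inversion_summand_def)
  finally show ?thesis .
qed

lemma inversion_partial_sum_Suc:
  assumes "Suc k < s"
  shows "inversion_partial_sum s r (Suc k) = inversion_partial_sum s r k + inversion_summand s r (Suc k)"
proof -
  obtain t where s: "s = Suc k + Suc t" using assms by (metis add_Suc_right less_imp_Suc_add)
  have exps: "s - Suc k = Suc t" "s + r - Suc k - 1 = t + r" "2*s+r - Suc k = Suc (k+2*t+2+r)"
     "2*s+r-1-Suc k = k+2*t+2+r" "s - Suc k - 1 = t" "s - k = Suc (Suc t)" "s+r-k-1 = Suc (t+r)"
     "2*s+r-1-k = Suc (k+2*t+2+r)" "s-k-1 = Suc t" "2*s+r-2*Suc k = 2*t+2+r"
    using s by auto
  define a where "a = q ^ Suc k"
  define b where "b = q ^ Suc t"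
  define c where "c = q ^ Suc (t+r)"
  have "Suc (k+2*t+2+r) = Suc k + Suc t + Suc (t+r)" "2*t+2+r = Suc t + Suc (t+r)"
    by simp_all
  then have pow: "q^s = a*b" "q^Suc (k+2*t+2+r) = a*b*c" "q^(2*t+2+r) = b*c"
    unfolding a_def b_def c_def s by (simp_all only: power_add)
  define da where "da = 1 - a"
  define db where "db = 1 - b"
  define dc where "dc = 1 - c"
  define dab where "dab = 1 - a*b"
  define dbc where "dbc = 1 - b*c"
  define dabc where "dabc = 1 - a*b*c"
  have nz: "da \<noteq> 0" "db \<noteq> 0" "dab \<noteq> 0" "dabc \<noteq> 0"
    using pow_Suc_neq_1[of k] pow_Suc_neq_1[of t] pow_Suc_neq_1[of "k+2*t+2+r"] pow_neq_1[of s] pow s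
    by (auto simp: da_def db_def dab_def dabc_def a_def b_def simp del: power_Suc)
  have qf: "qfact q (Suc (t+r)) = qfact q (t+r) * dc"
    "qfact q (Suc (k+2*t+2+r)) = qfact q (k+2*t+2+r) * dabc"
    "qfact q (Suc t) = qfact q t * db" "qfact q (Suc k) = qfact q k * da"
    using qfact_Suc[of q "t+r"] qfact_Suc[of q "k+2*t+2+r"] qfact_Suc[of q t] qfact_Suc[of q k]
    by (simp_all only: da_def db_def dc_def dabc_def pow(2) flip: a_def b_def c_def)
  have "q^(Suc (Suc t) choose 2) = q^(Suc t choose 2) * b"
    by (simp add: b_def numeral_2_eq_2 power_add)
  \<comment> \<open>All three terms are C times products of factors 1 - (monomial in a, b, c), so the step
      reduces to a polynomial identity in a, b, c.\<close>
  define C where "C = (-1)^(Suc k) * q^(Suc t choose 2) * qfact q (2*s+r) * qfact q (t+r)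
     / (qfact q k * qfact q (k+2*t+2+r) * qfact q t * qfact q r * da * dabc * db * dab)"
  have "inversion_partial_sum s r (Suc k) = C * (dabc*db)"
    unfolding inversion_partial_sum_def exps C_def pow dab_def[symmetric] qf using nz by (simp add: field_simps qf)
  moreover have "inversion_partial_sum s r k = C * (-b*dc*da)"
    unfolding inversion_partial_sum_def exps C_def pow dab_def[symmetric] qf \<open>q^(Suc (Suc t) choose 2) = _\<close>
    using nz by (simp add: field_simps qf)
  moreover have "inversion_summand s r (Suc k) = C * (dab*dbc)"
    unfolding inversion_summand_def exps C_def pow dbc_def[symmetric] qf using nz by (simp add: field_simps qf)
  moreover have "dabc*db = -b*dc*da + dab*dbc"
    unfolding da_def db_def dc_def dab_def dbc_def dabc_def by (simp add: algebra_simps)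
  ultimately show ?thesis by (simp add: algebra_simps)
qed

lemma inversion_partial_sum_eq_sum: "j < s \<Longrightarrow> (\<Sum>k\<le>j. inversion_summand s r k) = inversion_partial_sum s r j"
  by (induction j) (simp_all add: inversion_partial_sum_0 inversion_partial_sum_Suc)

lemma inversion_partial_sum_last:
  assumes "s \<ge> 1"
  shows "inversion_partial_sum s r (s-1) = - ((-1)^s * qbinom q (2*s+r) (int s))"
proof -
  have exps: "s - (s-1) = 1" "s+r-(s-1)-1 = r" "2*s+r-1-(s-1) = s+r" "s-(s-1)-1 = 0" "2*s+r-s = s+r"
    using assms by auto
  have low: "qfact q s = qfact q (s-1) * (1 - q^s)"
    using assms qfact_Suc[of q "s-1"] by simp
  have sign: "(-1::'a)^(s-1) = - ((-1)^s)"
    using assms by (cases s) simp_all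
  have "1 - q^s \<noteq> 0" using pow_neq_1 assms by simp
  then show ?thesis
    unfolding inversion_partial_sum_def exps sign using assms
    by (simp add: binomial_eq_0 qbinom_eq_qfact exps low field_simps)
qed

lemma lucas_coeff_0 [simp]: "lucas_coeff q j 0 = 1"
  using qint_nonzero[of j] by (simp add: lucas_coeff_def binomial_eq_0)

lemma inversion_summand_eq:
  assumes "k < s"
  shows "(-1)^k * qbinom q (2*s+r) (int k) * lucas_coeff q (2*s+r-2*k) (s-k) = inversion_summand s r k"
proof -
  obtain t where s: "s = k + Suc t" using assms by (metis add_Suc_right less_imp_Suc_add)
  have exps: "2*s+r-2*k = Suc (Suc (2*t+r))" "s-k = Suc t" "s+r-k-1 = t+r"
    using s by auto
  have diff: "Suc (Suc (2*t+r)) - Suc t = Suc (t+r)" by simp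
  have "qbinom q (Suc (t+r)) (int (Suc t)) = qfact q (Suc (t+r)) / (qfact q (Suc t) * qfact q r)"
    using qbinom_eq_qfact[of "Suc t" "Suc (t+r)"] by simp
  then have "lucas_coeff q (Suc (Suc (2*t+r))) (Suc t)
      = q^(Suc t choose 2) * qfact q (Suc (t+r)) / (qfact q (Suc t) * qfact q r)
        * ((1 - q^Suc (Suc (2*t+r))) / (1 - q^Suc (t+r)))"
    unfolding lucas_coeff_def diff by (simp add: qint_def del: power_Suc)
  also have "\<dots> = q^(Suc t choose 2) * qfact q (t+r) * (1 - q^Suc (Suc (2*t+r)))
      / (qfact q (Suc t) * qfact q r)"
    unfolding qfact_Suc[of q "t+r"] using pow_Suc_neq_1[of "t+r"] by (simp add: field_simps del: power_Suc)
  finally have coeff: "lucas_coeff q (Suc (Suc (2*t+r))) (Suc t) = \<dots>" .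
  show ?thesis
    unfolding exps coeff inversion_summand_def using assms
    by (simp add: qbinom_eq_qfact exps field_simps del: power_Suc)
qed

lemma sum_alternating_qbinom_lucas_coeff:
  assumes "2*s \<le> n"
  shows "(\<Sum>k\<le>s. (-1)^k * qbinom q n (int k) * lucas_coeff q (n-2*k) (s-k)) = (if s = 0 then 1 else 0)"
proof (cases s)
  case (Suc u)
  obtain r where n: "n = 2*s + r" using assms le_Suc_ex by blast
  have "(\<Sum>k\<le>u. (-1)^k * qbinom q n (int k) * lucas_coeff q (n-2*k) (s-k)) = (\<Sum>k\<le>u. inversion_summand s r k)"
  proof (rule sum.cong)
    fix k assume "k \<in> {..u}"
    then have "k < s" using Suc by simp
    then show "(-1)^k * qbinom q n (int k) * lucas_coeff q (n-2*k) (s-k) = inversion_summand s r k"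
      unfolding n by (rule inversion_summand_eq)
  qed simp
  also have "\<dots> = inversion_partial_sum s r u"
    using Suc by (simp add: inversion_partial_sum_eq_sum)
  finally show ?thesis
    using inversion_partial_sum_last[of s r] Suc by (simp add: n)
qed simp

lemma power_eq_sum_qbinom_Luc_sq:
  "y^(n div 2) = (\<Sum>k\<le>n div 2. (-1)^k * qbinom q n (int k) * Luc_sq q (n-2*k) y)"
proof -
  define N where "N = n div 2"
  define g where "g = (\<lambda>k m. (-1)^k * qbinom q n (int k) * lucas_coeff q (n-2*k) m * y^(N-k-m))"
  have "(n - 2*k) div 2 = N - k" if "k \<le> N" for k using that unfolding N_def by auto
  then have "(\<Sum>k\<le>N. (-1)^k * qbinom q n (int k) * Luc_sq q (n-2*k) y) = (\<Sum>k\<le>N. \<Sum>m\<le>N-k. g k m)"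
    unfolding Luc_sq_def g_def by (auto simp: sum_distrib_left mult.assoc diff_diff_add intro!: sum.cong)
  also have "\<dots> = (\<Sum>(k,m)\<in>{(k,m). k+m \<le> N}. g k m)"
    by (subst sum.Sigma) (auto intro!: sum.cong)
  also have "\<dots> = (\<Sum>d\<le>N. \<Sum>k\<le>d. g k (d-k))"
    by (rule sum.triangle_reindex_eq)
  also have "\<dots> = (\<Sum>d\<le>N. y^(N-d) * (\<Sum>k\<le>d. (-1)^k * qbinom q n (int k) * lucas_coeff q (n-2*k) (d-k)))"
    unfolding g_def sum_distrib_left by (intro sum.cong refl) (auto simp: algebra_simps)
  also have "\<dots> = (\<Sum>d\<le>N. y^(N-d) * (if d = 0 then 1 else 0))"
    by (intro sum.cong refl) (simp add: sum_alternating_qbinom_lucas_coeff N_def)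
  also have "\<dots> = y^N" by (simp add: if_distrib cong: if_cong)
  finally show ?thesis unfolding N_def ..
qed

lemma sum_qbinom_row_Luc_sq:
  assumes "a \<le> 1" and "i < N"
  shows "(\<Sum>j<N. qbinom q (2*i+a) (int i - int j) * ((-1)^j * Luc_sq q (2*j+a) y)) = (-1)^i * y^i"
proof -
  define f where "f j = qbinom q (2*i+a) (int i - int j) * ((-1)^j * Luc_sq q (2*j+a) y)" for j
  have "(\<Sum>j<N. f j) = (\<Sum>j\<in>{0..i}. f j)"
    by (rule sum.mono_neutral_right) (use assms in \<open>auto simp: f_def qbinom_neg\<close>)
  also have "\<dots> = (\<Sum>k\<in>{0..i}. f (i - k))"
    by (rule sum.atLeastAtMost_rev[where n=0, simplified])
  also have "\<dots> = (-1)^i * (\<Sum>k\<le>i. (-1)^k * qbinom q (2*i+a) (int k) * Luc_sq q (2*i+a-2*k) y)"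
  proof -
    have "f (i - k) = (-1)^i * ((-1)^k * qbinom q (2*i+a) (int k) * Luc_sq q (2*i+a-2*k) y)" if "k \<le> i" for k
    proof -
      have "(-1::'a)^(i-k) = (-1)^i * (-1)^k"
        using that by (simp flip: neg_one_power_add_eq_neg_one_power_diff power_add)
      moreover have "2*(i-k)+a = 2*i+a-2*k" "int i - int (i-k) = int k" using that by auto
      ultimately show ?thesis by (simp add: f_def)
    qed
    then show ?thesis by (simp add: atLeast0AtMost sum_distrib_left)
  qed
  also have "(\<Sum>k\<le>i. (-1)^k * qbinom q (2*i+a) (int k) * Luc_sq q (2*i+a-2*k) y) = y^i"
    using power_eq_sum_qbinom_Luc_sq[of y "2*i+a"] assms(1) by simp
  finally show ?thesis by (simp add: f_def)
qed

lemma det_qbinom_matrix_eq_Luc_sq: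
  assumes a: "a \<le> 1" and n: "n \<ge> 1"
  shows "det (mat n n (\<lambda>(i,j). qbinom q (2*i+a) (int i - int j) * y
      + qbinom q (2*i+a+2) (int i + 1 - int j))) = Luc_sq q (2*n+a) y"
    (is "det ?M = _")
proof -
  define v where "v j = (-1)^j * Luc_sq q (2*j+a) y" for j
  define S where "S i = (\<Sum>j<n. qbinom q (2*i+a) (int i - int j) * v j)" for i
  have S: "S i = (-1)^i * y^i" if "i < n" for i
    unfolding S_def v_def using sum_qbinom_row_Luc_sq[OF a that] .
  have "S n + v n = (-1)^n * y^n"
    unfolding S_def v_def using sum_qbinom_row_Luc_sq[OF a lessI, of n y] by simp
  then have S_n: "S n = (-1)^n * y^n - v n" by (simp add: eq_diff_eq)
  have row: "(\<Sum>j<n. ?M $$ (i,j) * v j) = y * S i + S (Suc i)" if "i < n" for i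
    using that by (simp add: S_def sum.distrib sum_distrib_left algebra_simps)
  have "det ?M = (-1)^(n-1) * (\<Sum>j<n. ?M $$ (n-1,j) * v j)"
  proof (rule det_lower_hessenberg)
    show "(\<Sum>j<n. ?M $$ (i,j) * v j) = 0" if "Suc i < n" for i
      using that by (subst row) (simp_all add: S)
  qed (use a n in \<open>auto simp: v_def qbinom_neg Luc_sq_def\<close>)
  also have "\<dots> = Luc_sq q (2*n+a) y"
  proof -
    obtain m where m: "n = Suc m" using n by (cases n) auto
    show ?thesis using row[of m] S[of m] S_n unfolding m by (simp add: v_def algebra_simps)
  qed
  finally show ?thesis .
qed

end

theorem proposition7:
  fixes q x :: "'a::field_char_0" and n :: nat
  assumes "n \<ge> 1"
    and q_generic: "\<And>k::nat. k \<ge> 1 \<Longrightarrow> q ^ k \<noteq> 1"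
  shows "det (mat n n (\<lambda>(i,j). qbinom q (2*i) (int i - int j) * x^2
              + qbinom q (2*i+2) (int i + 1 - int j))) = Luc q (2*n) x
       \<and> x * det (mat n n (\<lambda>(i,j). qbinom q (2*i+1) (int i - int j) * x^2
              + qbinom q (2*i+3) (int i + 1 - int j))) = Luc q (2*n+1) x"
proof -
  interpret q_not_root_of_unity q using q_generic by unfold_locales
  show ?thesis
    using det_qbinom_matrix_eq_Luc_sq[of 0 n "x^2"] det_qbinom_matrix_eq_Luc_sq[of 1 n "x^2"]
      Luc_eq_Luc_sq[of "2*n" q x] Luc_eq_Luc_sq[of "2*n+1" q x] assms(1)
    by (simp add: numeral_3_eq_3)
qed

end
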